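(* Let $\mu$ be a symmetric measure on $L_n$ with $C^0_\mu<3$, and write $a_j=\mu(j)$. Then $a_i<a_j<\frac{j}{i}a_i$ for all $1\le i<j\le\lceil n/2\rceil$.
   Context: $L_n$ is the path graph with vertices $\{1,\dots,n\}$ and edges $\{j,j+1\}$, with distance $|i-j|$. A measure on $L_n$ is a weight function $\mu:\{1,\dots,n\}\to(0,\infty)$, $\mu(A)=\sum_{v\in A}\mu(v)$; it is symmetric if $\mu(j)=\mu(n+1-j)$ for all $j$. $B(x,r)=\{y:|x-y|\le r\}$ and $C^0_\mu=\max_{1\le x\le n}\mu(B(x,1))/\mu(x)$. *)

theory Defs
  imports Complex_Main
begin

text \<open>Path graph L_n on vertices {1..n}, distance |i-j|. A measure is a weight
function mu on {1..n} with positive values (values outside {1..n} are irrelevant).\<close>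

definition is_measure_Ln :: "nat \<Rightarrow> (nat \<Rightarrow> real) \<Rightarrow> bool" where
  "is_measure_Ln n mu \<longleftrightarrow> (\<forall>v\<in>{1..n}. mu v > 0)"

definition symmetric_Ln :: "nat \<Rightarrow> (nat \<Rightarrow> real) \<Rightarrow> bool" where
  "symmetric_Ln n mu \<longleftrightarrow> (\<forall>j\<in>{1..n}. mu j = mu (n + 1 - j))"

definition ball_Ln :: "nat \<Rightarrow> nat \<Rightarrow> nat \<Rightarrow> nat set" where
  "ball_Ln n x r = {y \<in> {1..n}. \<bar>int x - int y\<bar> \<le> int r}"

definition meas_Ln :: "(nat \<Rightarrow> real) \<Rightarrow> nat set \<Rightarrow> real" where
  "meas_Ln mu A = (\<Sum>v\<in>A. mu v)"

definition C0_Ln :: "nat \<Rightarrow> (nat \<Rightarrow> real) \<Rightarrow> real" where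
  "C0_Ln n mu = Max ((\<lambda>x. meas_Ln mu (ball_Ln n x 1) / mu x) ` {1..n})"

end

theory Submission
  imports Defs
begin

text \<open>Extending \<open>\<mu>\<close> by \<open>\<mu>(0) = 0\<close>, the hypothesis \<open>C\<^sup>0\<^sub>\<mu> < 3\<close> at each vertex \<open>k\<close> gives
  \<open>\<mu>(k-1) + \<mu>(k+1) < 2\<mu>(k)\<close> for \<open>1 \<le> k < n\<close>: the extended sequence is strictly concave,
  so its increments \<open>\<mu>(k+1) - \<mu>(k)\<close> strictly decrease. Symmetry turns the increment at
  \<open>n - k\<close> into minus the one at \<open>k\<close>, so the increments are positive on the first half,
  and strict concavity together with \<open>\<mu>(0) = 0\<close> makes the secant slopes \<open>\<mu>(j)/j\<close>
  strictly decrease.\<close>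

lemma concave_increments_strict_decreasing:
  fixes f :: "nat \<Rightarrow> real"
  assumes concave: "\<And>k. 0 < k \<Longrightarrow> k < n \<Longrightarrow> f (k - 1) + f (k + 1) < 2 * f k"
    and "p < q" "q < n"
  shows "f (Suc q) - f q < f (Suc p) - f p"
  using assms(2,3)
proof (induction q)
  case 0
  then show ?case by simp
next
  case (Suc q)
  have "f (Suc (Suc q)) - f (Suc q) < f (Suc q) - f q"
    using concave[of "Suc q"] Suc.prems by simp
  then show ?case
    using Suc by (cases "p = q") auto
qed

lemma concave_symmetric_strict_increasing:
  fixes f :: "nat \<Rightarrow> real"
  assumes concave: "\<And>k. 0 < k \<Longrightarrow> k < n \<Longrightarrow> f (k - 1) + f (k + 1) < 2 * f k"
    and symmetric: "\<And>j. 1 \<le> j \<Longrightarrow> j \<le> n \<Longrightarrow> f (n + 1 - j) = f j"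
    and "0 < i" "i < j" "2 * j \<le> n + 1"
  shows "f i < f j"
proof -
  have increment_pos: "f k < f (Suc k)" if "0 < k" "2 * Suc k \<le> n + 1" for k
  proof -
    have "f (Suc (n - k)) - f (n - k) < f (Suc k) - f k"
      using concave_increments_strict_decreasing[OF concave, where p = k and q = "n - k"] that
      by simp
    moreover have "f (Suc (n - k)) = f k" "f (n - k) = f (Suc k)"
      using symmetric[of k] symmetric[of "Suc k"] that by (simp_all add: Suc_diff_le)
    ultimately show ?thesis by simp
  qed
  show ?thesis
    using assms(3-5)
  proof (induction j)
    case 0
    then show ?case by simp
  next
    case (Suc j)
    then show ?case
      using increment_pos[of j] by (cases "i = j") auto
  qed
qed

lemma concave_slope_strict_decreasing:
  fixes f :: "nat \<Rightarrow> real"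
  assumes concave: "\<And>k. 0 < k \<Longrightarrow> k < n \<Longrightarrow> f (k - 1) + f (k + 1) < 2 * f k"
    and "f 0 = 0" "0 < i" "i < j" "j \<le> n"
  shows "f j / j < f i / i"
proof -
  have slope_step: "f (Suc k) / Suc k < f k / k" if "0 < k" "k < n" for k
  proof -
    have "(\<Sum>m<k. f (Suc k) - f k) < (\<Sum>m<k. f (Suc m) - f m)"
      using that by (intro sum_strict_mono concave_increments_strict_decreasing[OF concave]) auto
    also have "\<dots> = f k"
      using sum_lessThan_telescope[of f k] \<open>f 0 = 0\<close> by simp
    finally have "k * (f (Suc k) - f k) < f k"
      by simp
    then show ?thesis
      using that by (simp add: field_simps)
  qed
  show ?thesis
    using assms(3-5)
  proof (induction j)
    case 0
    then show ?case by simp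
  next
    case (Suc j)
    then show ?case
      using slope_step[of j] by (cases "i = j") auto
  qed
qed

lemma ball_Ln_radius_one:
  assumes "0 < k" "k < n"
  shows "ball_Ln n k 1 = {k - 1, k, k + 1} - {0}"
  using assms unfolding ball_Ln_def by auto

lemma C0_Ln_ge:
  assumes "x \<in> {1..n}"
  shows "meas_Ln mu (ball_Ln n x 1) / mu x \<le> C0_Ln n mu"
  unfolding C0_Ln_def using assms by (intro Max_ge) auto

lemma C0_Ln_lt_3_concave:
  assumes "is_measure_Ln n mu" "C0_Ln n mu < 3" "0 < k" "k < n"
  shows "(mu(0 := 0)) (k - 1) + (mu(0 := 0)) (k + 1) < 2 * (mu(0 := 0)) k"
proof -
  have "mu k > 0"
    using assms unfolding is_measure_Ln_def by simp
  moreover have "meas_Ln mu (ball_Ln n k 1) / mu k < 3"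
    using C0_Ln_ge[of k n mu] assms(2-4) by simp
  ultimately have "meas_Ln mu (ball_Ln n k 1) < 3 * mu k"
    by (simp add: divide_less_eq)
  also have "meas_Ln mu (ball_Ln n k 1) = sum (mu(0 := 0)) {k - 1, k, k + 1}"
    unfolding meas_Ln_def ball_Ln_radius_one[OF assms(3,4)]
    by (rule sum.mono_neutral_cong_left) auto
  also have "\<dots> = (mu(0 := 0)) (k - 1) + (mu(0 := 0)) k + (mu(0 := 0)) (k + 1)"
    using \<open>0 < k\<close> by (cases k) simp_all
  finally show ?thesis
    using \<open>0 < k\<close> by simp
qed

theorem lemma3p4:
  fixes n :: nat and mu :: "nat \<Rightarrow> real"
  assumes "n \<ge> 1"
    and "is_measure_Ln n mu"
    and "symmetric_Ln n mu"
    and "C0_Ln n mu < 3"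
  shows "\<forall>i j. 1 \<le> i \<and> i < j \<and> j \<le> nat \<lceil>real n / 2\<rceil> \<longrightarrow>
           mu i < mu j \<and> mu j < (real j / real i) * mu i"
proof (intro allI impI)
  fix i j
  assume "1 \<le> i \<and> i < j \<and> j \<le> nat \<lceil>real n / 2\<rceil>"
  then have ij: "0 < i" "i < j" "2 * j \<le> n + 1"
    by linarith+
  let ?f = "mu(0 := 0)"
  have concave: "?f (k - 1) + ?f (k + 1) < 2 * ?f k" if "0 < k" "k < n" for k
    using C0_Ln_lt_3_concave[OF assms(2,4) that] .
  have symmetric: "?f (n + 1 - k) = ?f k" if "1 \<le> k" "k \<le> n" for k
    using assms(3) that unfolding symmetric_Ln_def by simp
  have "?f i < ?f j"
    using concave_symmetric_strict_increasing[OF concave symmetric ij] by blast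
  moreover have "?f j / j < ?f i / i"
    using concave_slope_strict_decreasing[OF concave _ ij(1,2)] ij(3) by simp
  ultimately show "mu i < mu j \<and> mu j < (real j / real i) * mu i"
    using ij by (simp add: field_simps)
qed

end
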